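(* For all $m,n\in\mathbb{N}$ and every $\xi\in\mathbb{C}^{\Lambda^{\le}(m,n)}$, \[ \pi_2\big(M_\xi\colon\mathcal{P}_{\le m}(\mathbb{T}^n)\to\ell_{\frac{2m}{m+1}}(\Lambda^{\le}(m,n))\big)\le|\Lambda^{\le}(m,n)|^{\frac1{2m}}\|\xi\|_\infty . \] Moreover, for $\xi=\mathbf 1=(1,\dots,1)$, \[ \sqrt{1+\tfrac{n-1}{m}}\le\pi_2\big(M_{\mathbf 1}\colon\mathcal{P}_{\le m}(\mathbb{T}^n)\to\ell_{\frac{2m}{m+1}}(\Lambda^{\le}(m,n))\big)=|\Lambda^{\le}(m,n)|^{\frac1{2m}}\le2\sqrt{2e}\,\sqrt{1+\tfrac{n-1}{m}}. \]
   Context: $\Lambda^{\le}(m,n)=\{\alpha\in\mathbb{N}_0^n:\sum_j\alpha_j\le m\}$ and $|\Lambda^{\le}(m,n)|$ its cardinality. $\mathcal{P}_{\le m}(\mathbb{T}^n)$ is the space of analytic trigonometric polynomials $\sum_{\alpha\in\Lambda^{\le}(m,n)}c_\alpha z^\alpha$ on $\mathbb{T}^n$ with sup norm; $M_\xi P=(\xi_\alpha\widehat P(\alpha))_\alpha$. $\pi_2$ is the absolutely 2-summing norm. *)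

theory Defs
  imports "HOL-Analysis.Analysis"
begin

text \<open>Multi-indices: alpha in N_0^n represented as nat => nat vanishing at j >= n.\<close>
definition multi_idx :: "nat \<Rightarrow> nat \<Rightarrow> (nat \<Rightarrow> nat) set" where
  "multi_idx m n = {\<alpha>. (\<forall>j\<ge>n. \<alpha> j = 0) \<and> (\<Sum>j<n. \<alpha> j) \<le> m}"

text \<open>Analytic trig. polynomials of degree at most m on T^n, given by their coefficients.\<close>
definition polys :: "nat \<Rightarrow> nat \<Rightarrow> ((nat \<Rightarrow> nat) \<Rightarrow> complex) set" where
  "polys m n = {c. \<forall>\<alpha>. \<alpha> \<notin> multi_idx m n \<longrightarrow> c \<alpha> = 0}"

definition torus :: "nat \<Rightarrow> (nat \<Rightarrow> complex) set" where
  "torus n = {z. \<forall>j<n. cmod (z j) = 1}"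

definition poly_eval :: "nat \<Rightarrow> nat \<Rightarrow> ((nat \<Rightarrow> nat) \<Rightarrow> complex) \<Rightarrow> (nat \<Rightarrow> complex) \<Rightarrow> complex" where
  "poly_eval m n c z = (\<Sum>\<alpha>\<in>multi_idx m n. c \<alpha> * (\<Prod>j<n. z j ^ \<alpha> j))"

definition poly_norm :: "nat \<Rightarrow> nat \<Rightarrow> ((nat \<Rightarrow> nat) \<Rightarrow> complex) \<Rightarrow> real" where
  "poly_norm m n c = (SUP z\<in>torus n. cmod (poly_eval m n c z))"

definition lp_norm :: "real \<Rightarrow> 'i set \<Rightarrow> ('i \<Rightarrow> complex) \<Rightarrow> real" where
  "lp_norm p I x = (\<Sum>i\<in>I. cmod (x i) powr p) powr (1 / p)"

definition linf_norm :: "'i set \<Rightarrow> ('i \<Rightarrow> complex) \<Rightarrow> real" where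
  "linf_norm I x = (SUP i\<in>I. cmod (x i))"

definition mult_op :: "((nat \<Rightarrow> nat) \<Rightarrow> complex) \<Rightarrow> ((nat \<Rightarrow> nat) \<Rightarrow> complex) \<Rightarrow> ((nat \<Rightarrow> nat) \<Rightarrow> complex)" where
  "mult_op \<xi> c = (\<lambda>\<alpha>. \<xi> \<alpha> * c \<alpha>)"

definition dual_ball :: "nat \<Rightarrow> nat \<Rightarrow> (((nat \<Rightarrow> nat) \<Rightarrow> complex) \<Rightarrow> complex) set" where
  "dual_ball m n = {\<phi>.
     (\<forall>c\<in>polys m n. \<forall>d\<in>polys m n. \<forall>a b::complex.
        \<phi> (\<lambda>\<alpha>. a * c \<alpha> + b * d \<alpha>) = a * \<phi> c + b * \<phi> d) \<and>
     (\<forall>c\<in>polys m n. cmod (\<phi> c) \<le> poly_norm m n c)}"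

definition weak_l2 :: "nat \<Rightarrow> nat \<Rightarrow> ((nat \<Rightarrow> nat) \<Rightarrow> complex) list \<Rightarrow> real" where
  "weak_l2 m n xs = (SUP \<phi>\<in>dual_ball m n. sqrt (\<Sum>x\<leftarrow>xs. (cmod (\<phi> x))\<^sup>2))"

definition pi2 :: "nat \<Rightarrow> nat \<Rightarrow> (((nat \<Rightarrow> nat) \<Rightarrow> complex) \<Rightarrow> 'b) \<Rightarrow> ('b \<Rightarrow> real) \<Rightarrow> real" where
  "pi2 m n T NY = Inf {C. C \<ge> 0 \<and> (\<forall>xs. set xs \<subseteq> polys m n \<longrightarrow>
        sqrt (\<Sum>x\<leftarrow>xs. (NY (T x))\<^sup>2) \<le> C * weak_l2 m n xs)}"

end

theory Submission
  imports Defs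
begin

(* Write N = |multi_idx m n| and p = 2m/(m+1), so that 1/p - 1/2 = 1/(2m).

   Upper bound: by the power-mean inequality the p-norm of the coefficients of M_xi P is at most
   N^(1/(2m)) |xi|_inf times their 2-norm, and the coefficient map into ell_2 is 2-summing with
   constant 1.  For the latter, sample P at the (m+1)^n points (w^t, w^(t(m+1)), ...,
   w^(t(m+1)^(n-1))) with w = exp (2 pi i / (m+1)^n): the monomial z^alpha becomes
   w^(t c(alpha)), where c(alpha) is the base-(m+1) number with digits alpha_j, injective on
   multi-indices of degree at most m.  Discrete Parseval then turns the squared coefficient norms
   into an average of squared point evaluations, which are functionals of norm at most one.

   Lower bound for xi = 1: the conjugated characters conj (w^(t c(alpha))) each have p-norm
   N^(1/p), but weak 2-norm of the whole family at most sqrt((m+1)^n N), because by Parseval this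
   reduces to sum_beta |phi(z^beta)|^2 <= N for every phi of norm at most one.

   The numerical bounds come from (n+m)^m / m^m <= binom(n+m, m) <= (e (n+m)/m)^m. *)

section \<open>Multi-indices\<close>

lemma multi_idx_0: "multi_idx m 0 = {\<lambda>_. 0}"
  unfolding multi_idx_def by auto

lemma multi_idx_Suc:
  "multi_idx m (Suc n) = (\<Union>k\<le>m. (\<lambda>\<alpha>. \<alpha>(n := k)) ` multi_idx (m - k) n)"
proof (intro equalityI subsetI)
  fix \<alpha> assume "\<alpha> \<in> multi_idx m (Suc n)"
  then have zero: "\<forall>j\<ge>Suc n. \<alpha> j = 0" and deg: "(\<Sum>j<n. \<alpha> j) + \<alpha> n \<le> m"
    unfolding multi_idx_def by auto
  have "(\<Sum>j<n. (\<alpha>(n := 0)) j) = (\<Sum>j<n. \<alpha> j)" by (rule sum.cong) auto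
  then have "\<alpha>(n := 0) \<in> multi_idx (m - \<alpha> n) n"
    unfolding multi_idx_def using zero deg by auto
  then have "\<alpha> \<in> (\<lambda>\<beta>. \<beta>(n := \<alpha> n)) ` multi_idx (m - \<alpha> n) n"
    by (rule rev_image_eqI) simp
  then show "\<alpha> \<in> (\<Union>k\<le>m. (\<lambda>\<alpha>. \<alpha>(n := k)) ` multi_idx (m - k) n)"
    using deg by auto
next
  fix \<beta> assume "\<beta> \<in> (\<Union>k\<le>m. (\<lambda>\<alpha>. \<alpha>(n := k)) ` multi_idx (m - k) n)"
  then obtain k \<alpha> where "k \<le> m" "\<alpha> \<in> multi_idx (m - k) n" "\<beta> = \<alpha>(n := k)" by auto
  moreover have "(\<Sum>j<n. (\<alpha>(n := k)) j) = (\<Sum>j<n. \<alpha> j)" by (rule sum.cong) auto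
  ultimately show "\<beta> \<in> multi_idx m (Suc n)"
    unfolding multi_idx_def by auto
qed

lemma finite_multi_idx: "finite (multi_idx m n)"
  by (induction n arbitrary: m) (simp_all add: multi_idx_0 multi_idx_Suc)

lemma card_multi_idx: "card (multi_idx m n) = (n + m) choose m"
proof (induction n arbitrary: m)
  case 0
  then show ?case by (simp add: multi_idx_0)
next
  case (Suc n)
  define F where "F k = (\<lambda>\<alpha>::nat \<Rightarrow> nat. \<alpha>(n := k)) ` multi_idx (m - k) n" for k
  have "inj_on (\<lambda>\<alpha>. \<alpha>(n := k)) (multi_idx (m - k) n)" for k
  proof (rule inj_onI, rule ext)
    fix \<alpha> \<beta> j
    assume \<alpha>: "\<alpha> \<in> multi_idx (m - k) n" and \<beta>: "\<beta> \<in> multi_idx (m - k) n"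
      and "\<alpha>(n := k) = \<beta>(n := k)"
    then have "(\<alpha>(n := k)) j = (\<beta>(n := k)) j" by simp
    with \<alpha> \<beta> show "\<alpha> j = \<beta> j"
      unfolding multi_idx_def by (cases "j = n") auto
  qed
  then have card_F: "card (F k) = (n + (m - k)) choose (m - k)" for k
    unfolding F_def by (simp add: card_image Suc.IH)
  have disjoint: "F i \<inter> F j = {}" if "i \<noteq> j" for i j
    using that unfolding F_def by (auto dest: fun_cong[of _ _ n])
  have "multi_idx m (Suc n) = (\<Union>k\<le>m. F k)"
    unfolding F_def by (rule multi_idx_Suc)
  moreover have "finite (F k)" for k
    unfolding F_def by (simp add: finite_multi_idx)
  ultimately have "card (multi_idx m (Suc n)) = (\<Sum>k\<le>m. card (F k))"
    using disjoint by (simp add: card_UN_disjoint)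
  also have "\<dots> = (\<Sum>k\<le>m. (n + (m - k)) choose (m - k))" by (simp add: card_F)
  also have "\<dots> = (\<Sum>k\<le>m. (n + k) choose k)"
    using sum.atLeastAtMost_rev[of "\<lambda>k. (n + k) choose k" 0 m] by (simp add: atLeast0AtMost)
  also have "\<dots> = (Suc n + m) choose m" by (simp add: sum_choose_lower)
  finally show ?case .
qed

lemma multi_idx_nonempty: "multi_idx m n \<noteq> {}"
proof -
  have "(\<lambda>_. 0) \<in> multi_idx m n" by (simp add: multi_idx_def)
  then show ?thesis by blast
qed

lemma multi_idx_less_Suc: "\<alpha> \<in> multi_idx m n \<Longrightarrow> \<alpha> j < Suc m"
  unfolding multi_idx_def using member_le_sum[of j "{..<n}" \<alpha>] by (cases "j < n") auto

lemma multi_idx_eqI: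
  assumes "\<alpha> \<in> multi_idx m n" "\<beta> \<in> multi_idx m n" "\<And>j. j < n \<Longrightarrow> \<alpha> j = \<beta> j"
  shows "\<alpha> = \<beta>"
proof
  fix j show "\<alpha> j = \<beta> j"
    using assms unfolding multi_idx_def by (cases "j < n") auto
qed

section \<open>Binomial estimates\<close>

lemma power_div_fact_le_exp:
  fixes x :: real
  assumes "x \<ge> 0"
  shows "x ^ k / fact k \<le> exp x"
proof -
  have "(\<Sum>i\<in>{k}. x ^ i /\<^sub>R fact i) \<le> (\<Sum>i. x ^ i /\<^sub>R fact i)"
    by (rule sum_le_suminf[OF sums_summable[OF exp_converges]]) (use assms in auto)
  moreover have "exp x = (\<Sum>i. x ^ i /\<^sub>R fact i)" by (rule sums_unique[OF exp_converges])
  ultimately show ?thesis by (simp add: divide_inverse_commute)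
qed

lemma binomial_mult_fact_le_power: "(n choose k) * fact k \<le> (n ^ k :: nat)"
proof (cases "k \<le> n")
  case True
  have "(n choose k) * fact k = fact n div fact (n - k)"
    by (simp flip: binomial_fact_lemma[OF True])
  also have "\<dots> \<le> n ^ k" by (rule fact_div_fact_le_pow[OF True])
  finally show ?thesis .
qed (simp add: binomial_eq_0)

lemma binomial_le_exp_pow:
  assumes "k \<ge> 1"
  shows "real (n choose k) \<le> (exp 1 * real n / real k) ^ k"
proof -
  have "real (n choose k) * real k ^ k \<le> real (n choose k) * (exp (real k) * fact k)"
    using power_div_fact_le_exp[of "real k" k] by (intro mult_left_mono) (simp_all add: divide_le_eq)
  also have "\<dots> = exp (real k) * real ((n choose k) * fact k)"
    by simp
  also have "\<dots> \<le> exp (real k) * real (n ^ k)"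
    by (intro mult_left_mono) (simp_all only: of_nat_le_iff binomial_mult_fact_le_power exp_ge_zero)
  also have "exp (real k) = exp 1 ^ k"
    by (simp flip: exp_of_nat_mult)
  finally show ?thesis
    using assms by (simp add: power_divide power_mult_distrib le_divide_eq)
qed

lemma power_powr_inverse_double:
  fixes y :: real
  assumes "y > 0" "m \<ge> 1"
  shows "(y ^ m) powr (1 / (2 * real m)) = sqrt y"
  using assms by (simp add: powr_realpow[symmetric] powr_powr powr_half_sqrt[symmetric])

lemma sqrt_le_binomial_root:
  assumes "m \<ge> 1" "n \<ge> 1"
  shows "sqrt (1 + (real n - 1) / real m) \<le> real ((n + m) choose m) powr (1 / (2 * real m))"
proof -
  define x where "x = 1 + (real n - 1) / real m"
  have x: "x > 0" "x \<le> real (n + m) / real m"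
    unfolding x_def using assms by (simp_all add: field_simps)
  then have "x ^ m \<le> (real (n + m) / real m) ^ m"
    by (intro power_mono) simp_all
  also have "\<dots> \<le> real ((n + m) choose m)"
    by (rule binomial_ge_n_over_k_pow_k) simp
  finally have "(x ^ m) powr (1 / (2 * real m)) \<le> real ((n + m) choose m) powr (1 / (2 * real m))"
    using x by (simp add: powr_mono2)
  then have "sqrt x \<le> real ((n + m) choose m) powr (1 / (2 * real m))"
    by (simp only: power_powr_inverse_double[OF x(1) assms(1)])
  then show ?thesis
    by (simp only: x_def)
qed

lemma binomial_root_le:
  assumes "m \<ge> 1" "n \<ge> 1"
  shows "real ((n + m) choose m) powr (1 / (2 * real m)) \<le> sqrt (2 * exp 1) * sqrt (1 + (real n - 1) / real m)"
proof -
  define x where "x = 1 + (real n - 1) / real m"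
  have x: "x > 0" "real m * x = real m + real n - 1"
    unfolding x_def using assms by (simp_all add: field_simps)
  then have "real (n + m) / real m \<le> 2 * x"
    using assms by (simp add: divide_le_eq algebra_simps)
  then have ratio: "exp 1 * real (n + m) / real m \<le> 2 * exp 1 * x"
    using mult_left_mono[of _ _ "exp 1"] by (fastforce simp: mult_ac)
  have "real ((n + m) choose m) \<le> (exp 1 * real (n + m) / real m) ^ m"
    by (rule binomial_le_exp_pow[OF assms(1)])
  also have "\<dots> \<le> (2 * exp 1 * x) ^ m"
    using ratio by (intro power_mono) simp_all
  finally have "real ((n + m) choose m) powr (1 / (2 * real m)) \<le> ((2 * exp 1 * x) ^ m) powr (1 / (2 * real m))"
    by (simp add: powr_mono2)
  also have "\<dots> = sqrt (2 * exp 1) * sqrt x"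
    using x by (simp add: power_powr_inverse_double[OF _ assms(1)] real_sqrt_mult)
  finally show ?thesis
    unfolding x_def .
qed

lemma powr_mean_le_quadratic_mean:
  fixes u :: "'i \<Rightarrow> real"
  assumes J: "finite J" "J \<noteq> {}" and u: "\<And>i. i \<in> J \<Longrightarrow> u i > 0" and p: "0 < p" "p \<le> 2"
  shows "(\<Sum>i\<in>J. u i powr p) powr (1 / p) \<le> real (card J) powr (1 / p - 1 / 2) * sqrt (\<Sum>i\<in>J. (u i)\<^sup>2)"
proof -
  define N where "N = real (card J)"
  define Sp where "Sp = (\<Sum>i\<in>J. u i powr p)"
  define S2 where "S2 = (\<Sum>i\<in>J. (u i)\<^sup>2)"
  have N: "N > 0" unfolding N_def using J by (simp add: card_gt_0_iff)
  have Sp: "Sp \<ge> 0" and S2: "S2 \<ge> 0"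
    unfolding Sp_def S2_def by (simp_all add: sum_nonneg)
  have "convex_on {0<..} (\<lambda>x. x powr (2 / p))"
    by (rule powr_convex) (use p in simp)
  then have "(\<Sum>i\<in>J. (1 / N) *\<^sub>R u i powr p) powr (2 / p) \<le> (\<Sum>i\<in>J. (1 / N) * (u i powr p) powr (2 / p))"
    by (rule convex_on_sum[OF J]) (use N u in \<open>force simp: N_def\<close>)+
  also have "(\<Sum>i\<in>J. (1 / N) * (u i powr p) powr (2 / p)) = S2 / N"
    using p unfolding S2_def sum_divide_distrib
    by (intro sum.cong) (simp_all add: powr_powr less_imp_le[OF u])
  finally have "(Sp / N) powr (2 / p) \<le> S2 / N"
    by (simp add: Sp_def sum_divide_distrib)
  then have "((Sp / N) powr (2 / p)) powr (1 / 2) \<le> (S2 / N) powr (1 / 2)"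
    by (simp add: powr_mono2)
  then have "Sp powr (1 / p) / N powr (1 / p) \<le> sqrt S2 / sqrt N"
    using p Sp S2 N by (simp add: powr_powr powr_divide powr_half_sqrt)
  then have "Sp powr (1 / p) \<le> N powr (1 / p) / N powr (1 / 2) * sqrt S2"
    using N by (simp add: divide_le_eq powr_half_sqrt field_simps)
  then show ?thesis
    unfolding N_def Sp_def S2_def by (simp add: powr_diff)
qed

lemma lp_norm_le_card_powr_l2_norm:
  assumes I: "finite I" and p: "0 < p" "p \<le> 2"
  shows "lp_norm p I v \<le> real (card I) powr (1 / p - 1 / 2) * sqrt (\<Sum>i\<in>I. (cmod (v i))\<^sup>2)"
proof -
  define J where "J = {i \<in> I. v i \<noteq> 0}"
  have J: "J \<subseteq> I" "finite J" unfolding J_def using I by auto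
  have sum_J: "(\<Sum>i\<in>I. f (cmod (v i))) = (\<Sum>i\<in>J. f (cmod (v i)))" if "f 0 = 0" for f :: "real \<Rightarrow> real"
    by (rule sum.mono_neutral_right[OF I J(1)]) (auto simp: J_def that)
  show ?thesis
  proof (cases "J = {}")
    case True
    then show ?thesis
      unfolding lp_norm_def using sum_J[of "\<lambda>x. x powr p"] by (simp add: sum_nonneg)
  next
    case False
    have "lp_norm p I v = (\<Sum>i\<in>J. cmod (v i) powr p) powr (1 / p)"
      unfolding lp_norm_def using sum_J[of "\<lambda>x. x powr p"] by simp
    also have "\<dots> \<le> real (card J) powr (1 / p - 1 / 2) * sqrt (\<Sum>i\<in>J. (cmod (v i))\<^sup>2)"
      by (rule powr_mean_le_quadratic_mean[OF J(2) False _ p]) (simp add: J_def)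
    also have "\<dots> \<le> real (card I) powr (1 / p - 1 / 2) * sqrt (\<Sum>i\<in>J. (cmod (v i))\<^sup>2)"
      using p I J by (intro mult_right_mono powr_mono2) (simp_all add: card_mono sum_nonneg)
    finally show ?thesis
      using sum_J[of power2] by simp
  qed
qed

lemma norm_le_linf_norm: "finite I \<Longrightarrow> i \<in> I \<Longrightarrow> cmod (\<xi> i) \<le> linf_norm I \<xi>"
  unfolding linf_norm_def by (rule cSUP_upper) auto

lemma linf_norm_nonneg: "finite I \<Longrightarrow> I \<noteq> {} \<Longrightarrow> linf_norm I \<xi> \<ge> 0"
  using norm_le_linf_norm by (meson all_not_in_conv norm_ge_zero order_trans)

lemma linf_norm_const_one: "I \<noteq> {} \<Longrightarrow> linf_norm I (\<lambda>_. 1) = 1"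
  by (simp add: linf_norm_def)

lemma l2_norm_mult_op_le:
  assumes "finite I"
  shows "sqrt (\<Sum>i\<in>I. (cmod (mult_op \<xi> x i))\<^sup>2) \<le> linf_norm I \<xi> * sqrt (\<Sum>i\<in>I. (cmod (x i))\<^sup>2)"
proof (cases "I = {}")
  case False
  then have L: "linf_norm I \<xi> \<ge> 0"
    using assms by (rule linf_norm_nonneg[rotated])
  have "(\<Sum>i\<in>I. (cmod (mult_op \<xi> x i))\<^sup>2) \<le> (\<Sum>i\<in>I. (linf_norm I \<xi>)\<^sup>2 * (cmod (x i))\<^sup>2)"
    using norm_le_linf_norm[OF assms]
    by (intro sum_mono) (simp add: mult_op_def norm_mult power_mult_distrib mult_right_mono power_mono)
  then have "sqrt (\<Sum>i\<in>I. (cmod (mult_op \<xi> x i))\<^sup>2) \<le> sqrt ((linf_norm I \<xi>)\<^sup>2 * (\<Sum>i\<in>I. (cmod (x i))\<^sup>2))"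
    by (simp add: sum_distrib_left)
  also have "\<dots> = linf_norm I \<xi> * sqrt (\<Sum>i\<in>I. (cmod (x i))\<^sup>2)"
    using L by (simp add: real_sqrt_mult)
  finally show ?thesis .
qed simp

lemma lp_norm_nonneg: "lp_norm p I x \<ge> 0"
  by (simp add: lp_norm_def)

section \<open>Discrete Fourier analysis on a grid of the torus\<close>

definition radix_code :: "nat \<Rightarrow> nat \<Rightarrow> (nat \<Rightarrow> nat) \<Rightarrow> nat" where
  "radix_code b n \<alpha> = (\<Sum>j<n. \<alpha> j * b ^ j)"

lemma radix_code_Suc: "radix_code b (Suc n) \<alpha> = radix_code b n \<alpha> + \<alpha> n * b ^ n"
  by (simp add: radix_code_def)

lemma radix_code_less: "(\<And>j. j < n \<Longrightarrow> \<alpha> j < b) \<Longrightarrow> radix_code b n \<alpha> < b ^ n"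
proof (induction n)
  case 0
  then show ?case by (simp add: radix_code_def)
next
  case (Suc n)
  have "radix_code b (Suc n) \<alpha> < b ^ n + \<alpha> n * b ^ n"
    using Suc by (simp add: radix_code_Suc)
  also have "\<dots> = Suc (\<alpha> n) * b ^ n"
    by simp
  also have "\<dots> \<le> b * b ^ n"
    using Suc.prems[of n] by (intro mult_le_mono1) simp
  finally show ?case
    by simp
qed

lemma radix_code_eqD:
  assumes "\<And>j. j < n \<Longrightarrow> \<alpha> j < b" "\<And>j. j < n \<Longrightarrow> \<beta> j < b"
    and "radix_code b n \<alpha> = radix_code b n \<beta>"
  shows "j < n \<Longrightarrow> \<alpha> j = \<beta> j"
  using assms
proof (induction n arbitrary: j)
  case (Suc n)
  have less: "radix_code b n \<alpha> < b ^ n" "radix_code b n \<beta> < b ^ n"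
    using Suc.prems(2,3) by (simp_all add: radix_code_less)
  have "\<alpha> n = radix_code b (Suc n) \<alpha> div b ^ n" "\<beta> n = radix_code b (Suc n) \<beta> div b ^ n"
    using less Suc.prems(2)[of n] by (simp_all add: radix_code_Suc)
  then have top: "\<alpha> n = \<beta> n"
    using Suc.prems(4) by simp
  then have "radix_code b n \<alpha> = radix_code b n \<beta>"
    using Suc.prems(4) unfolding radix_code_Suc by simp
  then have "\<alpha> i = \<beta> i" if "i < n" for i
    using Suc.IH[OF that] Suc.prems(2,3) by simp
  with top show ?case
    using Suc.prems(1) less_Suc_eq by auto
qed simp

lemma inj_on_radix_code_multi_idx: "inj_on (radix_code (Suc m) n) (multi_idx m n)"
proof (rule inj_onI)
  fix \<alpha> \<beta>
  assume \<alpha>: "\<alpha> \<in> multi_idx m n" and \<beta>: "\<beta> \<in> multi_idx m n"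
    and eq: "radix_code (Suc m) n \<alpha> = radix_code (Suc m) n \<beta>"
  show "\<alpha> = \<beta>"
    by (rule multi_idx_eqI[OF \<alpha> \<beta>], rule radix_code_eqD[OF
          multi_idx_less_Suc[OF \<alpha>] multi_idx_less_Suc[OF \<beta>] eq])
qed

lemma radix_code_multi_idx_less: "\<alpha> \<in> multi_idx m n \<Longrightarrow> radix_code (Suc m) n \<alpha> < Suc m ^ n"
  by (rule radix_code_less) (rule multi_idx_less_Suc)

lemma cis_sum: "(\<Prod>j\<in>A. cis (f j)) = cis (\<Sum>j\<in>A. f j)"
  by (induction A rule: infinite_finite_induct) (simp_all add: cis_mult)

lemma sum_roots_of_unity_orthogonal:
  fixes a b K :: nat
  assumes "a < K" "b < K"
  shows "(\<Sum>t<K. cis (2 * pi * t * a / K) * cnj (cis (2 * pi * t * b / K))) = (if a = b then of_nat K else 0)"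
proof -
  define \<omega> where "\<omega> = cis (2 * pi * (real a - real b) / K)"
  have "cis (2 * pi * t * a / K) * cnj (cis (2 * pi * t * b / K)) = \<omega> ^ t" for t
    unfolding \<omega>_def by (simp add: cis_cnj cis_mult Complex.DeMoivre algebra_simps diff_divide_distrib)
  moreover have "(\<Sum>t<K. \<omega> ^ t) = 0" if "a \<noteq> b"
  proof -
    have "\<omega> ^ K = cis (2 * pi * (real a - real b))"
      unfolding \<omega>_def Complex.DeMoivre using assms by simp
    also have "\<dots> = 1"
      by (rule cis_multiple_2pi) (simp add: Ints_diff)
    moreover have "\<omega> \<noteq> 1"
    proof
      assume "\<omega> = 1"
      define y where "y = (real a - real b) / K"
      have "cos (2 * pi * y) = 1"
        using \<open>\<omega> = 1\<close> by (simp add: \<omega>_def y_def complex_eq_iff)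
      then obtain i :: int where "2 * pi * y = real_of_int i * 2 * pi"
        by (auto simp: cos_one_2pi_int)
      then have "y = real_of_int i"
        by simp
      then have i: "real a - real b = real K * i"
        using assms by (simp add: y_def divide_eq_eq mult.commute)
      moreover have "\<bar>real a - real b\<bar> < real K"
        using assms by linarith
      ultimately have "real K * \<bar>real_of_int i\<bar> < real K * 1"
        by (simp add: abs_mult)
      then have "\<bar>real_of_int i\<bar> < 1"
        by (rule mult_left_less_imp_less) simp
      then have "i = 0" by linarith
      with i that show False by simp
    qed
    ultimately show ?thesis by (simp add: sum_gp_strict)
  qed
  ultimately show ?thesis
    by (simp add: \<omega>_def)
qed

lemma parseval_roots_of_unity:
  fixes h :: "'a \<Rightarrow> nat" and K :: nat
  assumes L: "finite L" and h: "inj_on h L" "\<And>\<alpha>. \<alpha> \<in> L \<Longrightarrow> h \<alpha> < K"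
  shows "(\<Sum>t<K. (cmod (\<Sum>\<alpha>\<in>L. c \<alpha> * cis (2 * pi * t * h \<alpha> / K)))\<^sup>2)
    = real K * (\<Sum>\<alpha>\<in>L. (cmod (c \<alpha>))\<^sup>2)"
proof -
  define e where "e t \<alpha> = cis (2 * pi * t * h \<alpha> / K)" for t :: nat and \<alpha>
  have orth: "(\<Sum>t<K. e t \<alpha> * cnj (e t \<beta>)) = (if \<alpha> = \<beta> then of_nat K else 0)"
    if "\<alpha> \<in> L" "\<beta> \<in> L" for \<alpha> \<beta>
    using sum_roots_of_unity_orthogonal[OF h(2)[OF that(1)] h(2)[OF that(2)]]
      inj_on_eq_iff[OF h(1) that] by (simp add: e_def)
  have "complex_of_real (\<Sum>t<K. (cmod (\<Sum>\<alpha>\<in>L. c \<alpha> * e t \<alpha>))\<^sup>2)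
      = (\<Sum>t<K. (\<Sum>\<alpha>\<in>L. c \<alpha> * e t \<alpha>) * cnj (\<Sum>\<beta>\<in>L. c \<beta> * e t \<beta>))"
    by (simp only: of_real_sum complex_norm_square)
  also have "\<dots> = (\<Sum>t<K. \<Sum>\<alpha>\<in>L. \<Sum>\<beta>\<in>L. c \<alpha> * cnj (c \<beta>) * (e t \<alpha> * cnj (e t \<beta>)))"
    by (simp add: cnj_sum sum_product mult_ac)
  also have "\<dots> = (\<Sum>\<alpha>\<in>L. \<Sum>\<beta>\<in>L. c \<alpha> * cnj (c \<beta>) * (\<Sum>t<K. e t \<alpha> * cnj (e t \<beta>)))"
    by (simp only: sum.swap[of _ "{..<K}" L] sum_distrib_left)
  also have "\<dots> = (\<Sum>\<alpha>\<in>L. \<Sum>\<beta>\<in>L. c \<alpha> * cnj (c \<beta>) * (if \<alpha> = \<beta> then of_nat K else 0))"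
    by (intro sum.cong refl) (simp add: orth)
  also have "\<dots> = (\<Sum>\<alpha>\<in>L. c \<alpha> * cnj (c \<alpha>) * of_nat K)"
    using L by (simp add: if_distrib sum.delta cong: if_cong)
  also have "\<dots> = (\<Sum>\<alpha>\<in>L. complex_of_real (real K) * complex_of_real ((cmod (c \<alpha>))\<^sup>2))"
    by (intro sum.cong refl) (simp only: complex_norm_square of_real_of_nat_eq mult.commute)
  also have "\<dots> = complex_of_real (real K * (\<Sum>\<alpha>\<in>L. (cmod (c \<alpha>))\<^sup>2))"
    by (simp only: of_real_mult of_real_sum sum_distrib_left)
  finally show ?thesis
    unfolding e_def of_real_eq_iff .
qed

definition grid_point :: "nat \<Rightarrow> nat \<Rightarrow> nat \<Rightarrow> nat \<Rightarrow> complex" where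
  "grid_point m n t j = cis (2 * pi * t * Suc m ^ j / Suc m ^ n)"

lemma grid_point_in_torus: "grid_point m n t \<in> torus n"
  by (simp add: torus_def grid_point_def)

lemma monomial_grid_point:
  "(\<Prod>j<n. grid_point m n t j ^ \<alpha> j) = cis (2 * pi * t * radix_code (Suc m) n \<alpha> / Suc m ^ n)"
proof -
  have "(\<Prod>j<n. grid_point m n t j ^ \<alpha> j) = (\<Prod>j<n. cis (\<alpha> j * (2 * pi * t * Suc m ^ j / Suc m ^ n)))"
    by (simp add: grid_point_def Complex.DeMoivre)
  also have "\<dots> = cis (2 * pi * t * radix_code (Suc m) n \<alpha> / Suc m ^ n)"
    by (simp add: cis_sum radix_code_def sum_distrib_left sum_divide_distrib mult_ac)
  finally show ?thesis .
qed

lemma sum_norm_poly_eval_grid: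
  "(\<Sum>t<Suc m ^ n. (cmod (poly_eval m n c (grid_point m n t)))\<^sup>2)
    = real (Suc m ^ n) * (\<Sum>\<alpha>\<in>multi_idx m n. (cmod (c \<alpha>))\<^sup>2)"
  unfolding poly_eval_def monomial_grid_point
  by (rule parseval_roots_of_unity[OF finite_multi_idx inj_on_radix_code_multi_idx radix_code_multi_idx_less])

lemma norm_monomial_torus: "z \<in> torus n \<Longrightarrow> cmod (\<Prod>j<n. z j ^ \<alpha> j) = 1"
  by (simp add: torus_def prod_norm[symmetric] norm_power)

lemma norm_poly_eval_le_sum_norm:
  assumes "z \<in> torus n"
  shows "cmod (poly_eval m n c z) \<le> (\<Sum>\<alpha>\<in>multi_idx m n. cmod (c \<alpha>))"
  unfolding poly_eval_def using norm_sum[of "\<lambda>\<alpha>. c \<alpha> * (\<Prod>j<n. z j ^ \<alpha> j)" "multi_idx m n"]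
  by (simp add: norm_mult norm_monomial_torus[OF assms])

lemma norm_poly_eval_le_poly_norm: "z \<in> torus n \<Longrightarrow> cmod (poly_eval m n c z) \<le> poly_norm m n c"
  unfolding poly_norm_def
  by (rule cSUP_upper) (auto intro!: bdd_aboveI2 norm_poly_eval_le_sum_norm)

lemma torus_nonempty: "torus n \<noteq> {}"
proof -
  have "(\<lambda>_. 1) \<in> torus n" by (simp add: torus_def)
  then show ?thesis by blast
qed

lemma poly_norm_le_sum_norm: "poly_norm m n c \<le> (\<Sum>\<alpha>\<in>multi_idx m n. cmod (c \<alpha>))"
  unfolding poly_norm_def
  by (rule cSUP_least[OF torus_nonempty norm_poly_eval_le_sum_norm])

lemma poly_norm_nonneg: "poly_norm m n c \<ge> 0"
  using torus_nonempty norm_poly_eval_le_poly_norm[of _ n m c] by (auto intro: order_trans[OF norm_ge_zero])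

lemma zero_in_dual_ball: "(\<lambda>_. 0) \<in> dual_ball m n"
  by (simp add: dual_ball_def poly_norm_nonneg)

lemma poly_eval_in_dual_ball: "z \<in> torus n \<Longrightarrow> (\<lambda>c. poly_eval m n c z) \<in> dual_ball m n"
  unfolding dual_ball_def
  by (simp add: poly_eval_def sum.distrib sum_distrib_left algebra_simps norm_poly_eval_le_poly_norm
      [unfolded poly_eval_def])

lemma dual_ball_linear:
  "\<phi> \<in> dual_ball m n \<Longrightarrow> c \<in> polys m n \<Longrightarrow> d \<in> polys m n \<Longrightarrow>
    \<phi> (\<lambda>\<alpha>. a * c \<alpha> + b * d \<alpha>) = a * \<phi> c + b * \<phi> d"
  by (simp add: dual_ball_def)

lemma dual_ball_norm_le: "\<phi> \<in> dual_ball m n \<Longrightarrow> c \<in> polys m n \<Longrightarrow> cmod (\<phi> c) \<le> poly_norm m n c"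
  by (simp add: dual_ball_def)

lemma dual_ball_sum:
  assumes \<phi>: "\<phi> \<in> dual_ball m n" and "finite A" "\<And>i. i \<in> A \<Longrightarrow> g i \<in> polys m n"
  shows "\<phi> (\<lambda>\<alpha>. \<Sum>i\<in>A. w i * g i \<alpha>) = (\<Sum>i\<in>A. w i * \<phi> (g i))"
  using assms(2,3)
proof (induction A rule: finite_induct)
  case empty
  have "(\<lambda>_. 0) \<in> polys m n" by (simp add: polys_def)
  from dual_ball_linear[OF \<phi> this this, of 0 0] show ?case by simp
next
  case (insert i A)
  have "(\<lambda>\<alpha>. \<Sum>i\<in>A. w i * g i \<alpha>) \<in> polys m n"
    using insert.prems by (simp add: polys_def)
  then have "\<phi> (\<lambda>\<alpha>. w i * g i \<alpha> + 1 * (\<Sum>i\<in>A. w i * g i \<alpha>))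
      = w i * \<phi> (g i) + 1 * \<phi> (\<lambda>\<alpha>. \<Sum>i\<in>A. w i * g i \<alpha>)"
    using insert.prems by (intro dual_ball_linear[OF \<phi>]) simp_all
  then show ?case
    using insert by simp
qed

lemma bdd_above_weak_l2:
  assumes "set xs \<subseteq> polys m n"
  shows "bdd_above ((\<lambda>\<phi>. sqrt (\<Sum>x\<leftarrow>xs. (cmod (\<phi> x))\<^sup>2)) ` dual_ball m n)"
proof (rule bdd_aboveI2)
  fix \<phi> assume "\<phi> \<in> dual_ball m n"
  then have "(\<Sum>x\<leftarrow>xs. (cmod (\<phi> x))\<^sup>2) \<le> (\<Sum>x\<leftarrow>xs. (poly_norm m n x)\<^sup>2)"
    using assms by (intro sum_list_mono power_mono dual_ball_norm_le) auto
  then show "sqrt (\<Sum>x\<leftarrow>xs. (cmod (\<phi> x))\<^sup>2) \<le> sqrt (\<Sum>x\<leftarrow>xs. (poly_norm m n x)\<^sup>2)"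
    by (rule real_sqrt_le_mono)
qed

lemma weak_l2_ge:
  "set xs \<subseteq> polys m n \<Longrightarrow> \<phi> \<in> dual_ball m n \<Longrightarrow> sqrt (\<Sum>x\<leftarrow>xs. (cmod (\<phi> x))\<^sup>2) \<le> weak_l2 m n xs"
  unfolding weak_l2_def by (rule cSUP_upper[OF _ bdd_above_weak_l2])

lemma weak_l2_nonneg: "set xs \<subseteq> polys m n \<Longrightarrow> weak_l2 m n xs \<ge> 0"
  using weak_l2_ge[OF _ zero_in_dual_ball] by fastforce

lemma weak_l2_le:
  "(\<And>\<phi>. \<phi> \<in> dual_ball m n \<Longrightarrow> (\<Sum>x\<leftarrow>xs. (cmod (\<phi> x))\<^sup>2) \<le> B) \<Longrightarrow> weak_l2 m n xs \<le> sqrt B"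
  unfolding weak_l2_def using zero_in_dual_ball by (intro cSUP_least) auto

lemma sum_list_sum_commute: "(\<Sum>x\<leftarrow>xs. \<Sum>t\<in>T. f x t) = (\<Sum>t\<in>T. \<Sum>x\<leftarrow>xs. f x t)"
  by (induction xs) (simp_all add: sum.distrib)

lemma sum_l2_coeffs_le_weak_l2:
  assumes "set xs \<subseteq> polys m n"
  shows "(\<Sum>x\<leftarrow>xs. \<Sum>\<alpha>\<in>multi_idx m n. (cmod (x \<alpha>))\<^sup>2) \<le> (weak_l2 m n xs)\<^sup>2"
proof -
  let ?K = "Suc m ^ n"
  have point: "(\<Sum>x\<leftarrow>xs. (cmod (poly_eval m n x (grid_point m n t)))\<^sup>2) \<le> (weak_l2 m n xs)\<^sup>2" for t
    by (rule sqrt_le_D[OF weak_l2_ge[OF assms poly_eval_in_dual_ball[OF grid_point_in_torus]]])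
  have "real ?K * (\<Sum>x\<leftarrow>xs. \<Sum>\<alpha>\<in>multi_idx m n. (cmod (x \<alpha>))\<^sup>2)
      = (\<Sum>t<?K. \<Sum>x\<leftarrow>xs. (cmod (poly_eval m n x (grid_point m n t)))\<^sup>2)"
    by (simp add: sum_list_const_mult sum_norm_poly_eval_grid flip: sum_list_sum_commute)
  also have "\<dots> \<le> real ?K * (weak_l2 m n xs)\<^sup>2"
    using sum_mono[of "{..<?K}", OF point] by simp
  finally show ?thesis by simp
qed

definition monomial_coeffs :: "(nat \<Rightarrow> nat) \<Rightarrow> (nat \<Rightarrow> nat) \<Rightarrow> complex" where
  "monomial_coeffs \<beta> \<alpha> = (if \<alpha> = \<beta> then 1 else 0)"

lemma dual_ball_apply:
  assumes "\<phi> \<in> dual_ball m n"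
  shows "\<phi> (\<lambda>\<alpha>. if \<alpha> \<in> multi_idx m n then w \<alpha> else 0)
    = (\<Sum>\<beta>\<in>multi_idx m n. w \<beta> * \<phi> (monomial_coeffs \<beta>))"
proof -
  have "(\<lambda>\<alpha>. if \<alpha> \<in> multi_idx m n then w \<alpha> else 0) = (\<lambda>\<alpha>. \<Sum>\<beta>\<in>multi_idx m n. w \<beta> * monomial_coeffs \<beta> \<alpha>)"
    by (simp add: monomial_coeffs_def if_distrib sum.delta' finite_multi_idx cong: if_cong)
  then show ?thesis
    by (simp only:) (rule dual_ball_sum[OF assms finite_multi_idx], simp add: monomial_coeffs_def polys_def)
qed

text \<open>Test \<open>\<phi>\<close> against the polynomial whose coefficients are the conjugates of the values of
  \<open>\<phi>\<close> at the monomials; Cauchy-Schwarz finishes the argument.\<close>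
lemma dual_ball_coeffs_l2_le:
  assumes \<phi>: "\<phi> \<in> dual_ball m n"
  shows "(\<Sum>\<beta>\<in>multi_idx m n. (cmod (\<phi> (monomial_coeffs \<beta>)))\<^sup>2) \<le> real (card (multi_idx m n))"
proof -
  let ?L = "multi_idx m n"
  define a where "a \<beta> = \<phi> (monomial_coeffs \<beta>)" for \<beta>
  define S where "S = (\<Sum>\<beta>\<in>?L. (cmod (a \<beta>))\<^sup>2)"
  define r where "r = (\<lambda>\<alpha>. if \<alpha> \<in> ?L then cnj (a \<alpha>) else 0)"
  have S: "S \<ge> 0" unfolding S_def by (simp add: sum_nonneg)
  have "\<phi> r = (\<Sum>\<beta>\<in>?L. cnj (a \<beta>) * a \<beta>)"
    unfolding r_def dual_ball_apply[OF \<phi>] a_def[symmetric] ..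
  also have "\<dots> = complex_of_real S"
    unfolding S_def of_real_sum by (intro sum.cong refl) (simp only: complex_norm_square mult.commute)
  finally have "S = cmod (\<phi> r)"
    using S by simp
  also have "\<dots> \<le> poly_norm m n r"
    using \<phi> by (rule dual_ball_norm_le) (simp add: r_def polys_def)
  also have "\<dots> \<le> (\<Sum>\<beta>\<in>?L. 1 * cmod (a \<beta>))"
    using poly_norm_le_sum_norm[of m n r] by (simp add: r_def)
  finally have "S\<^sup>2 \<le> (\<Sum>\<beta>\<in>?L. 1 * cmod (a \<beta>))\<^sup>2"
    using S by (simp add: power_mono)
  also have "\<dots> \<le> (\<Sum>\<beta>\<in>?L. 1\<^sup>2) * S"
    unfolding S_def by (rule Cauchy_Schwarz_ineq_sum)
  finally have "S * S \<le> real (card ?L) * S"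
    by (simp add: power2_eq_square)
  then have "S \<le> real (card ?L)"
    using S by (cases "S = 0") simp_all
  then show ?thesis
    unfolding S_def a_def .
qed

definition pi2_bound :: "nat \<Rightarrow> nat \<Rightarrow> (((nat \<Rightarrow> nat) \<Rightarrow> complex) \<Rightarrow> 'b) \<Rightarrow> ('b \<Rightarrow> real) \<Rightarrow> real \<Rightarrow> bool" where
  "pi2_bound m n T NY C \<longleftrightarrow> C \<ge> 0 \<and> (\<forall>xs. set xs \<subseteq> polys m n \<longrightarrow>
     sqrt (\<Sum>x\<leftarrow>xs. (NY (T x))\<^sup>2) \<le> C * weak_l2 m n xs)"

lemma pi2_eq_Inf: "pi2 m n T NY = Inf (Collect (pi2_bound m n T NY))"
  unfolding pi2_def pi2_bound_def by simp

lemma pi2_le: "pi2_bound m n T NY C \<Longrightarrow> pi2 m n T NY \<le> C"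
  unfolding pi2_eq_Inf by (rule cInf_lower) (auto simp: pi2_bound_def intro: bdd_belowI[of _ 0])

lemma pi2_ge:
  "pi2_bound m n T NY C \<Longrightarrow> (\<And>C. pi2_bound m n T NY C \<Longrightarrow> B \<le> C) \<Longrightarrow> B \<le> pi2 m n T NY"
  unfolding pi2_eq_Inf by (rule cInf_greatest) auto

lemma pi2_bound_if_coeff_l2_bound:
  assumes C: "C \<ge> 0" and NY: "\<And>y. NY y \<ge> 0"
    and bound: "\<And>x. x \<in> polys m n \<Longrightarrow> NY (T x) \<le> C * sqrt (\<Sum>\<alpha>\<in>multi_idx m n. (cmod (x \<alpha>))\<^sup>2)"
  shows "pi2_bound m n T NY C"
  unfolding pi2_bound_def
proof (intro conjI allI impI C)
  fix xs assume xs: "set xs \<subseteq> polys m n"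
  have "(\<Sum>x\<leftarrow>xs. (NY (T x))\<^sup>2) \<le> (\<Sum>x\<leftarrow>xs. C\<^sup>2 * (\<Sum>\<alpha>\<in>multi_idx m n. (cmod (x \<alpha>))\<^sup>2))"
  proof (rule sum_list_mono)
    fix x assume "x \<in> set xs"
    then have "(NY (T x))\<^sup>2 \<le> (C * sqrt (\<Sum>\<alpha>\<in>multi_idx m n. (cmod (x \<alpha>))\<^sup>2))\<^sup>2"
      using xs NY bound by (intro power_mono) auto
    then show "(NY (T x))\<^sup>2 \<le> C\<^sup>2 * (\<Sum>\<alpha>\<in>multi_idx m n. (cmod (x \<alpha>))\<^sup>2)"
      by (simp add: power_mult_distrib sum_nonneg)
  qed
  also have "\<dots> \<le> C\<^sup>2 * (weak_l2 m n xs)\<^sup>2"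
    by (simp add: sum_list_const_mult mult_left_mono sum_l2_coeffs_le_weak_l2[OF xs])
  finally show "sqrt (\<Sum>x\<leftarrow>xs. (NY (T x))\<^sup>2) \<le> C * weak_l2 m n xs"
    using C weak_l2_nonneg[OF xs] by (simp add: real_le_lsqrt power_mult_distrib)
qed

lemma lp_norm_mult_op_le:
  assumes "m \<ge> 1"
  shows "lp_norm (2 * real m / (real m + 1)) (multi_idx m n) (mult_op \<xi> x)
    \<le> real (card (multi_idx m n)) powr (1 / (2 * real m)) * linf_norm (multi_idx m n) \<xi>
       * sqrt (\<Sum>\<alpha>\<in>multi_idx m n. (cmod (x \<alpha>))\<^sup>2)"
proof -
  let ?p = "2 * real m / (real m + 1)" and ?L = "multi_idx m n"
  have p: "0 < ?p" "?p \<le> 2" "1 / ?p - 1 / 2 = 1 / (2 * real m)"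
    using assms by (simp_all add: field_simps)
  have "lp_norm ?p ?L (mult_op \<xi> x)
      \<le> real (card ?L) powr (1 / (2 * real m)) * sqrt (\<Sum>\<alpha>\<in>?L. (cmod (mult_op \<xi> x \<alpha>))\<^sup>2)"
    using lp_norm_le_card_powr_l2_norm[OF finite_multi_idx p(1,2)] by (simp only: p(3))
  also have "\<dots> \<le> real (card ?L) powr (1 / (2 * real m)) * (linf_norm ?L \<xi> * sqrt (\<Sum>\<alpha>\<in>?L. (cmod (x \<alpha>))\<^sup>2))"
    by (intro mult_left_mono l2_norm_mult_op_le finite_multi_idx) simp
  finally show ?thesis
    by (simp add: mult.assoc)
qed

lemma pi2_bound_mult_op:
  assumes "m \<ge> 1"
  shows "pi2_bound m n (mult_op \<xi>) (lp_norm (2 * real m / (real m + 1)) (multi_idx m n))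
    (real (card (multi_idx m n)) powr (1 / (2 * real m)) * linf_norm (multi_idx m n) \<xi>)"
  by (rule pi2_bound_if_coeff_l2_bound)
    (simp_all add: lp_norm_nonneg lp_norm_mult_op_le[OF assms] linf_norm_nonneg finite_multi_idx multi_idx_nonempty)

section \<open>The lower bound for the identity multiplier\<close>

definition grid_character :: "nat \<Rightarrow> nat \<Rightarrow> nat \<Rightarrow> (nat \<Rightarrow> nat) \<Rightarrow> complex" where
  "grid_character m n t \<alpha> =
     (if \<alpha> \<in> multi_idx m n then cnj (cis (2 * pi * t * radix_code (Suc m) n \<alpha> / Suc m ^ n)) else 0)"

lemma sum_dual_grid_characters_le:
  assumes \<phi>: "\<phi> \<in> dual_ball m n"
  shows "(\<Sum>t<Suc m ^ n. (cmod (\<phi> (grid_character m n t)))\<^sup>2)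
    \<le> real (Suc m ^ n) * real (card (multi_idx m n))"
proof -
  let ?L = "multi_idx m n" and ?K = "Suc m ^ n"
  define a where "a \<beta> = \<phi> (monomial_coeffs \<beta>)" for \<beta>
  have "cmod (\<phi> (grid_character m n t))
      = cmod (\<Sum>\<beta>\<in>?L. cnj (a \<beta>) * cis (2 * pi * t * radix_code (Suc m) n \<beta> / ?K))" for t
  proof -
    have "\<phi> (grid_character m n t) = cnj (\<Sum>\<beta>\<in>?L. cnj (a \<beta>) * cis (2 * pi * t * radix_code (Suc m) n \<beta> / ?K))"
      unfolding grid_character_def[abs_def] dual_ball_apply[OF \<phi>] a_def[symmetric]
      by (simp add: cnj_sum mult.commute)
    then show ?thesis
      by (simp only: complex_mod_cnj)
  qed
  then have "(\<Sum>t<?K. (cmod (\<phi> (grid_character m n t)))\<^sup>2)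
      = (\<Sum>t<?K. (cmod (\<Sum>\<beta>\<in>?L. cnj (a \<beta>) * cis (2 * pi * t * radix_code (Suc m) n \<beta> / ?K)))\<^sup>2)"
    by (simp only:)
  also have "\<dots> = real ?K * (\<Sum>\<beta>\<in>?L. (cmod (cnj (a \<beta>)))\<^sup>2)"
    by (rule parseval_roots_of_unity[OF finite_multi_idx inj_on_radix_code_multi_idx
          radix_code_multi_idx_less])
  also have "\<dots> \<le> real ?K * real (card ?L)"
    using dual_ball_coeffs_l2_le[OF \<phi>] by (simp add: a_def)
  finally show ?thesis .
qed

lemma weak_l2_grid_characters_le:
  "weak_l2 m n (map (grid_character m n) [0..<Suc m ^ n])
    \<le> sqrt (real (Suc m ^ n) * real (card (multi_idx m n)))"
proof (rule weak_l2_le)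
  fix \<phi> assume "\<phi> \<in> dual_ball m n"
  then show "(\<Sum>x\<leftarrow>map (grid_character m n) [0..<Suc m ^ n]. (cmod (\<phi> x))\<^sup>2)
      \<le> real (Suc m ^ n) * real (card (multi_idx m n))"
    unfolding map_map o_def interv_sum_list_conv_sum_set_nat set_upt atLeast0LessThan
    by (rule sum_dual_grid_characters_le)
qed

lemma lp_norm_grid_character:
  "lp_norm p (multi_idx m n) (mult_op (\<lambda>_. 1) (grid_character m n t)) = real (card (multi_idx m n)) powr (1 / p)"
  unfolding lp_norm_def by (simp add: mult_op_def grid_character_def)

lemma pi2_bound_mult_op_one_ge:
  assumes "m \<ge> 1" and C: "pi2_bound m n (mult_op (\<lambda>_. 1)) (lp_norm (2 * real m / (real m + 1)) (multi_idx m n)) C"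
  shows "real (card (multi_idx m n)) powr (1 / (2 * real m)) \<le> C"
proof -
  let ?p = "2 * real m / (real m + 1)" and ?K = "Suc m ^ n"
  define N where "N = real (card (multi_idx m n))"
  define xs where "xs = map (grid_character m n) [0..<?K]"
  have N: "N > 0"
    unfolding N_def using multi_idx_nonempty finite_multi_idx by (simp add: card_gt_0_iff)
  have "set xs \<subseteq> polys m n"
    by (auto simp: xs_def polys_def grid_character_def)
  then have "sqrt (\<Sum>x\<leftarrow>xs. (lp_norm ?p (multi_idx m n) (mult_op (\<lambda>_. 1) x))\<^sup>2) \<le> C * weak_l2 m n xs"
    using C by (simp add: pi2_bound_def)
  also have "\<dots> \<le> C * sqrt (real ?K * N)"
    using C unfolding xs_def N_def pi2_bound_def by (intro mult_left_mono weak_l2_grid_characters_le) simp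
  finally have "sqrt (real ?K) * N powr (1 / ?p) \<le> sqrt (real ?K) * (C * sqrt N)"
    by (simp add: xs_def N_def lp_norm_grid_character interv_sum_list_conv_sum_set_nat
        real_sqrt_mult mult_ac)
  moreover have "1 / ?p = 1 / (2 * real m) + 1 / 2"
    using assms(1) by (simp add: field_simps)
  ultimately have "N powr (1 / (2 * real m)) * sqrt N \<le> C * sqrt N"
    using N by (simp add: powr_add powr_half_sqrt)
  then show ?thesis
    using N unfolding N_def by simp
qed

theorem lemma5p6:
  fixes m n :: nat
  assumes "m \<ge> 1" and "n \<ge> 1"
  shows "(\<forall>\<xi>::(nat \<Rightarrow> nat) \<Rightarrow> complex.
            pi2 m n (mult_op \<xi>) (lp_norm (2 * real m / (real m + 1)) (multi_idx m n))
              \<le> real (card (multi_idx m n)) powr (1 / (2 * real m)) * linf_norm (multi_idx m n) \<xi>)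
       \<and> sqrt (1 + (real n - 1) / real m)
            \<le> pi2 m n (mult_op (\<lambda>_. 1)) (lp_norm (2 * real m / (real m + 1)) (multi_idx m n))
       \<and> pi2 m n (mult_op (\<lambda>_. 1)) (lp_norm (2 * real m / (real m + 1)) (multi_idx m n))
            = real (card (multi_idx m n)) powr (1 / (2 * real m))
       \<and> real (card (multi_idx m n)) powr (1 / (2 * real m))
            \<le> 2 * sqrt (2 * exp 1) * sqrt (1 + (real n - 1) / real m)"
proof -
  let ?M1 = "pi2 m n (mult_op (\<lambda>_. 1)) (lp_norm (2 * real m / (real m + 1)) (multi_idx m n))"
    and ?A = "real (card (multi_idx m n)) powr (1 / (2 * real m))"
    and ?x = "1 + (real n - 1) / real m"
  have upper: "pi2 m n (mult_op \<xi>) (lp_norm (2 * real m / (real m + 1)) (multi_idx m n))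
      \<le> ?A * linf_norm (multi_idx m n) \<xi>" for \<xi>
    by (rule pi2_le[OF pi2_bound_mult_op[OF assms(1)]])
  have "?M1 = ?A"
  proof (rule antisym)
    show "?M1 \<le> ?A"
      using upper[of "\<lambda>_. 1"] by (simp add: linf_norm_const_one multi_idx_nonempty)
    show "?A \<le> ?M1"
      by (rule pi2_ge[OF pi2_bound_mult_op[OF assms(1)] pi2_bound_mult_op_one_ge[OF assms(1)]])
  qed
  moreover have "sqrt ?x \<le> ?A"
    using sqrt_le_binomial_root[OF assms] by (simp add: card_multi_idx)
  moreover have "?A \<le> 2 * sqrt (2 * exp 1) * sqrt ?x"
  proof -
    have "?A \<le> sqrt (2 * exp 1) * sqrt ?x"
      using binomial_root_le[OF assms] by (simp add: card_multi_idx)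
    also have "\<dots> \<le> 2 * sqrt (2 * exp 1) * sqrt ?x"
      using assms by simp
    finally show ?thesis .
  qed
  ultimately show ?thesis
    using upper by simp
qed

end
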